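(* Let $\mathcal{R}$ be the family of all halfplanes. For $k=2$ and any $m \geq 2$, we do not have hitting $2$-cliques with respect to $\mathcal{R}$; that is, there exists a finite point set $V \subset \mathbb{R}^2$ such that for every collection of pairwise disjoint $2$-element subsets of $V$ some hyperedge of $\mathcal{H}(V,\mathcal{R},m)$ contains none of these subsets.
   Context: For a finite $V \subset \mathbb{R}^2$ and a family $\mathcal{R}$ of subsets of $\mathbb{R}^2$, $\mathcal{H}(V,\mathcal{R},m)$ is the hypergraph on $V$ whose hyperedges are the sets $V \cap R$, $R \in \mathcal{R}$, of size exactly $m$. For fixed $k,m,\mathcal{R}$ we say we have hitting $k$-cliques if for every finite $V \subset \mathbb{R}^2$ there exist pairwise disjoint $k$-element subsets of $V$ such that every hyperedge of $\mathcal{H}(V,\mathcal{R},m)$ fully contains at least one of them. *)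

theory Defs
  imports "HOL-Analysis.Analysis"
begin

definition halfplanes :: "(real \<times> real) set set" where
  "halfplanes = {{p. a * fst p + b * snd p \<ge> c} | a b c. (a, b) \<noteq> (0, 0)}"

definition hyperedges :: "(real \<times> real) set \<Rightarrow> (real \<times> real) set set \<Rightarrow> nat \<Rightarrow> (real \<times> real) set set" where
  "hyperedges V \<R> m = {V \<inter> R | R. R \<in> \<R> \<and> card (V \<inter> R) = m}"

definition hitting_cliques :: "nat \<Rightarrow> nat \<Rightarrow> (real \<times> real) set set \<Rightarrow> bool" where
  "hitting_cliques k m \<R> \<longleftrightarrow>
     (\<forall>V. finite V \<longrightarrow>
        (\<exists>\<C>. (\<forall>S\<in>\<C>. S \<subseteq> V \<and> card S = k) \<and> pairwise disjnt \<C> \<and>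
             (\<forall>e\<in>hyperedges V \<R> m. \<exists>S\<in>\<C>. S \<subseteq> e)))"

end

theory Submission
  imports Defs
begin

(* An interval [a, b] is encoded by the point (a + b, a * b): since
   s (a + b) - a b - s^2 = (s - a) (b - s), the halfplane s x - y >= s^2 contains it iff a <= s <= b.
   Encoding each node of the complete m-ary tree of height m - 1 by the interval of leaf indices below
   it, the halfplane at a leaf contains exactly the m points of its root-to-leaf path, a hyperedge.
   Given disjoint pairs, descend from the root greedily: each of the j + 1 < m points of the current
   path is paired with at most one point, so some child of the current node completes no pair. *)

definition dual_halfplane :: "real \<Rightarrow> (real \<times> real) set" where
  "dual_halfplane s = {p. s * fst p - snd p \<ge> s\<^sup>2}"

definition interval_point :: "real \<Rightarrow> real \<Rightarrow> real \<times> real" where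
  "interval_point a b = (a + b, a * b)"

lemma dual_halfplane_in_halfplanes: "dual_halfplane s \<in> halfplanes"
  unfolding halfplanes_def
  by (rule CollectI, rule exI[of _ s], rule exI[of _ "-1"], rule exI[of _ "s\<^sup>2"])
    (simp add: dual_halfplane_def)

lemma interval_point_in_dual_halfplane_iff:
  assumes "a \<le> b"
  shows "interval_point a b \<in> dual_halfplane s \<longleftrightarrow> a \<le> s \<and> s \<le> b"
proof -
  have "interval_point a b \<in> dual_halfplane s \<longleftrightarrow> 0 \<le> (s - a) * (b - s)"
    by (simp add: dual_halfplane_def interval_point_def algebra_simps power2_eq_square)
  also have "\<dots> \<longleftrightarrow> a \<le> s \<and> s \<le> b"
    using assms by (auto simp: zero_le_mult_iff)
  finally show ?thesis .
qed

lemma interval_point_eq_iff: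
  assumes "a < b" "c < e"
  shows "interval_point a b = interval_point c e \<longleftrightarrow> a = c \<and> b = e"
proof
  assume "interval_point a b = interval_point c e"
  then have sum: "a + b = c + e" and prod: "a * b = c * e"
    by (simp_all add: interval_point_def)
  have "(b - a)\<^sup>2 = (a + b)\<^sup>2 - 4 * (a * b)" by algebra
  also have "\<dots> = (e - c)\<^sup>2" unfolding sum prod by algebra
  finally have "b - a = e - c"
    using assms by (simp add: power2_eq_iff)
  then show "a = c \<and> b = e"
    using sum by linarith
qed simp

lemma eq_div_iff_real_bounds:
  fixes q r b :: nat
  assumes "0 < b"
  shows "r = q div b \<longleftrightarrow>
    real r * real b \<le> real q + 1/4 \<and> real q + 1/4 \<le> (real r + 1) * real b - 1/2"
proof -
  have "r = q div b \<longleftrightarrow> r \<le> q div b \<and> q div b < Suc r"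
    by auto
  also have "\<dots> \<longleftrightarrow> r * b \<le> q \<and> q < Suc r * b"
    using assms by (simp only: less_eq_div_iff_mult_less_eq div_less_iff_less_mult)
  also have "\<dots> \<longleftrightarrow> real (r * b) \<le> real q + 1/4 \<and> real q + 1/4 \<le> real (Suc r * b) - 1/2"
    by linarith
  finally show ?thesis
    by (simp add: algebra_simps)
qed

(* Node (d, q) is the q-th vertex at depth d of the complete m-ary tree of height m - 1;
   its children are the nodes (d + 1, q * m + c) with c < m. *)
definition tree_nodes :: "nat \<Rightarrow> (nat \<times> nat) set" where
  "tree_nodes m = {(d, q). d < m \<and> q < m ^ d}"

definition ancestors :: "nat \<Rightarrow> nat \<Rightarrow> nat \<Rightarrow> (nat \<times> nat) set" where
  "ancestors m j q = (\<lambda>d. (d, q div m ^ (j - d))) ` {..j}"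

(* The interval of node (d, q) covers the indices of the leaves below it, shortened by 1/2 to stay
   nondegenerate at the leaves; leaf q is then singled out by the halfplane at q + 1/4. *)
definition node_point :: "nat \<Rightarrow> nat \<times> nat \<Rightarrow> real \<times> real" where
  "node_point m = (\<lambda>(d, q). interval_point (real q * real m ^ (m - 1 - d))
                                            ((real q + 1) * real m ^ (m - 1 - d) - 1/2))"

lemma finite_tree_nodes: "finite (tree_nodes m)"
proof -
  have "tree_nodes m = Sigma {..<m} (\<lambda>d. {..<m ^ d})"
    by (auto simp: tree_nodes_def)
  then show ?thesis
    by simp
qed

lemma ancestors_0: "ancestors m 0 q = {(0, q)}"
  by (simp add: ancestors_def)

lemma ancestors_Suc:
  assumes "c < m"
  shows "ancestors m (Suc j) (q * m + c) = insert (Suc j, q * m + c) (ancestors m j q)"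
proof -
  have "(q * m + c) div m ^ (Suc j - d) = q div m ^ (j - d)" if "d \<le> j" for d
  proof -
    have "(q * m + c) div m ^ (Suc j - d) = (q * m + c) div m div m ^ (j - d)"
      using that by (simp add: Suc_diff_le div_mult2_eq)
    also have "(q * m + c) div m = q"
      using assms by simp
    finally show ?thesis .
  qed
  then show ?thesis
    unfolding ancestors_def atMost_Suc by (auto simp: image_iff)
qed

lemma finite_ancestors: "finite (ancestors m j q)"
  by (simp add: ancestors_def)

lemma card_ancestors: "card (ancestors m j q) = Suc j"
  unfolding ancestors_def by (subst card_image) (auto intro: inj_onI)

lemma ancestors_subset_tree_nodes:
  assumes "j < m" "q < m ^ j"
  shows "ancestors m j q \<subseteq> tree_nodes m"
proof
  fix n assume "n \<in> ancestors m j q"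
  then obtain d where d: "d \<le> j" and n: "n = (d, q div m ^ (j - d))"
    unfolding ancestors_def by auto
  have "q < m ^ d * m ^ (j - d)"
    using assms(2) d by (simp flip: power_add)
  then have "q div m ^ (j - d) < m ^ d"
    by (rule less_mult_imp_div_less)
  then show "n \<in> tree_nodes m"
    using assms(1) d n by (simp add: tree_nodes_def)
qed

lemma node_interval_ordered:
  assumes "0 < m"
  shows "real q * real m ^ k < (real q + 1) * real m ^ k - 1/2"
proof -
  have "1 \<le> real m ^ k"
    using assms by simp
  then show ?thesis
    by (simp add: algebra_simps)
qed

lemma inj_on_node_point:
  assumes "2 \<le> m"
  shows "inj_on (node_point m) (tree_nodes m)"
proof (rule inj_onI)
  fix x y
  assume "x \<in> tree_nodes m" "y \<in> tree_nodes m" "node_point m x = node_point m y"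
  moreover obtain d1 q1 d2 q2 where xy: "x = (d1, q1)" "y = (d2, q2)"
    by fastforce
  ultimately have d: "d1 < m" "d2 < m"
    and lo: "real q1 * real m ^ (m - 1 - d1) = real q2 * real m ^ (m - 1 - d2)"
    and hi: "(real q1 + 1) * real m ^ (m - 1 - d1) = (real q2 + 1) * real m ^ (m - 1 - d2)"
    using assms interval_point_eq_iff[OF node_interval_ordered node_interval_ordered]
    by (auto simp: tree_nodes_def node_point_def)
  from lo hi have "real m ^ (m - 1 - d1) = real m ^ (m - 1 - d2)"
    by (simp add: algebra_simps)
  with assms d have "d1 = d2"
    by simp
  with lo assms have "q1 = q2"
    by simp
  with xy \<open>d1 = d2\<close> show "x = y"
    by simp
qed

lemma node_point_in_dual_halfplane_iff:
  assumes "0 < m"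
  shows "node_point m (d, r) \<in> dual_halfplane (real q + 1/4) \<longleftrightarrow> r = q div m ^ (m - 1 - d)"
proof -
  have "0 < m ^ (m - 1 - d)"
    using assms by simp
  then show ?thesis
    using node_interval_ordered[OF assms, of r "m - 1 - d"]
    by (simp add: node_point_def interval_point_in_dual_halfplane_iff eq_div_iff_real_bounds)
qed

lemma node_points_inter_dual_halfplane:
  assumes "0 < m" "q < m ^ (m - 1)"
  shows "node_point m ` tree_nodes m \<inter> dual_halfplane (real q + 1/4) =
    node_point m ` ancestors m (m - 1) q"
proof -
  have "{n \<in> tree_nodes m. node_point m n \<in> dual_halfplane (real q + 1/4)} = ancestors m (m - 1) q"
    using assms ancestors_subset_tree_nodes[of "m - 1" m q]
    by (auto simp: node_point_in_dual_halfplane_iff ancestors_def tree_nodes_def)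
  then show ?thesis
    by auto
qed

lemma exists_extension_avoiding_disjoint_pairs:
  assumes pairs: "\<forall>S\<in>C. card S = 2" and disj: "pairwise disjnt C"
    and avoid: "\<forall>S\<in>C. \<not> S \<subseteq> P" and "finite P" and "card P < card Y"
  shows "\<exists>y\<in>Y. \<forall>S\<in>C. \<not> S \<subseteq> insert y P"
proof -
  define partner where "partner p = (SOME y. {p, y} \<in> C \<and> y \<noteq> p)" for p
  have partner_eq: "partner p = y" if "{p, y} \<in> C" "y \<noteq> p" for p y
  proof -
    have partner: "{p, partner p} \<in> C" "partner p \<noteq> p"
      unfolding partner_def using someI[of "\<lambda>z. {p, z} \<in> C \<and> z \<noteq> p" y] that by simp_all
    have "\<not> disjnt {p, partner p} {p, y}"
      by (simp add: disjnt_def)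
    then have "{p, partner p} = {p, y}"
      using pairwiseD[OF disj partner(1) that(1)] by argo
    then show ?thesis
      using partner(2) by (simp add: doubleton_eq_iff)
  qed
  have bad: "y \<in> partner ` P" if "S \<in> C" "S \<subseteq> insert y P" for y S
  proof -
    have "card S = 2"
      using pairs that(1) by blast
    then obtain a b where S: "S = {a, b}" "a \<noteq> b"
      by (meson card_2_iff)
    have "y \<in> S"
      using avoid that by blast
    then obtain p where p: "S = {p, y}" "p \<noteq> y"
      using S by (cases "y = a") (auto simp: insert_commute)
    moreover have "p \<in> P"
      using p that(2) by blast
    ultimately show ?thesis
      using that(1) partner_eq by blast
  qed
  have "card (partner ` P) < card Y"
    using card_image_le[OF \<open>finite P\<close>, of partner] assms(5) by linarith
  then have "\<not> Y \<subseteq> partner ` P"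
    using \<open>finite P\<close> card_mono[of "partner ` P" Y] by (meson finite_imageI not_le)
  with bad show ?thesis
    by blast
qed

lemma exists_ancestors_avoiding_disjoint_pairs:
  assumes inj: "inj_on f (tree_nodes m)"
    and pairs: "\<forall>S\<in>C. card S = 2" and disj: "pairwise disjnt C" and "j < m"
  shows "\<exists>q < m ^ j. \<forall>S\<in>C. \<not> S \<subseteq> f ` ancestors m j q"
  using \<open>j < m\<close>
proof (induction j)
  case 0
  have "\<not> S \<subseteq> {f (0, 0)}" if "S \<in> C" for S
    using pairs that by (auto simp: subset_singleton_iff)
  then show ?case
    by (simp add: ancestors_0)
next
  case (Suc j)
  then obtain q where q: "q < m ^ j" and avoid: "\<forall>S\<in>C. \<not> S \<subseteq> f ` ancestors m j q"
    by auto
  define children where "children = (\<lambda>c. (Suc j, q * m + c)) ` {..<m}"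
  have child_index: "q * m + c < m ^ Suc j" if "c < m" for c
  proof -
    have "q * m + c < (q + 1) * m"
      using that by simp
    also have "\<dots> \<le> m ^ j * m"
      using q by (intro mult_right_mono) auto
    finally show ?thesis
      by (simp add: mult.commute)
  qed
  then have children_subset: "children \<subseteq> tree_nodes m"
    using Suc.prems by (auto simp: children_def tree_nodes_def)
  have "card (f ` ancestors m j q) = Suc j"
    using card_ancestors inj_on_subset[OF inj ancestors_subset_tree_nodes] q Suc.prems
    by (simp add: card_image)
  also have "\<dots> < card (f ` children)"
    using Suc.prems inj_on_subset[OF inj children_subset]
    by (simp add: card_image children_def inj_on_def)
  finally obtain y where "y \<in> f ` children" "\<forall>S\<in>C. \<not> S \<subseteq> insert y (f ` ancestors m j q)"
    using exists_extension_avoiding_disjoint_pairs[OF pairs disj avoid]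
    by (metis finite_imageI finite_ancestors)
  then obtain c where "c < m"
    and "\<forall>S\<in>C. \<not> S \<subseteq> f ` insert (Suc j, q * m + c) (ancestors m j q)"
    by (auto simp: children_def)
  with child_index[OF \<open>c < m\<close>] show ?case
    by (auto simp: ancestors_Suc)
qed

theorem corollary6:
  fixes m :: nat
  assumes "m \<ge> 2"
  shows "\<not> hitting_cliques 2 m halfplanes"
proof
  assume "hitting_cliques 2 m halfplanes"
  define V where "V = node_point m ` tree_nodes m"
  have "finite V"
    by (simp add: V_def finite_tree_nodes)
  with \<open>hitting_cliques 2 m halfplanes\<close> obtain C
    where cliques: "\<forall>S\<in>C. S \<subseteq> V \<and> card S = 2" and disj: "pairwise disjnt C"
      and hit: "\<forall>e\<in>hyperedges V halfplanes m. \<exists>S\<in>C. S \<subseteq> e"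
    unfolding hitting_cliques_def by (elim allE impE exE conjE)
  from cliques have pairs: "\<forall>S\<in>C. card S = 2"
    by simp
  have inj: "inj_on (node_point m) (tree_nodes m)"
    using assms by (rule inj_on_node_point)
  obtain q where q: "q < m ^ (m - 1)"
    and avoid: "\<forall>S\<in>C. \<not> S \<subseteq> node_point m ` ancestors m (m - 1) q"
    using exists_ancestors_avoiding_disjoint_pairs[OF inj pairs disj, of "m - 1"] assms by auto
  define e where "e = V \<inter> dual_halfplane (real q + 1/4)"
  have e: "e = node_point m ` ancestors m (m - 1) q"
    using node_points_inter_dual_halfplane[OF _ q] assms by (simp add: e_def V_def)
  have "card e = m"
    using card_ancestors inj_on_subset[OF inj ancestors_subset_tree_nodes[OF _ q]] assms
    by (simp add: e card_image)
  then have "e \<in> hyperedges V halfplanes m"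
    unfolding hyperedges_def e_def mem_Collect_eq
    using dual_halfplane_in_halfplanes by blast
  with hit obtain S where "S \<in> C" "S \<subseteq> e"
    by blast
  with avoid e show False
    by blast
qed

end
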